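(* Let $S\subset\mathbb{R}^2$ be a finite set of points in general position, let $f:\mathbb{R}^2\times[0,1]\to\mathbb{R}^2$ be an ambient isotopy, and let $S(t)=\{f(s,t): s\in S\}$ for $t\in[0,1]$. Suppose there is $t_0\in(0,1]$ such that $S(t)$ is in general position for all $t\in[0,t_0)$, and such that in $S(t_0)$ the triple $\{f(a,t_0),f(b,t_0),f(c,t_0)\}$ for distinct $a,b,c\in S$ is collinear and is the only collinear triple. If $f(c,t_0)$ lies on the segment between $f(a,t_0)$ and $f(b,t_0)$, then $ab$ is an exit edge of $S=S(0)$ with witness $c$.
   Context: General position: no three points collinear. An ambient isotopy of $\mathbb{R}^2$ is a continuous map $f:\mathbb{R}^2\times[0,1]\to\mathbb{R}^2$ such that $f(\cdot,t)$ is a homeomorphism for every $t$ and $f(\cdot,0)$ is the identity. For distinct $a,b,c\in S$, the segment $ab$ is an exit edge of $S$ with witness $c$ if there is no $p\in S$ such that the line through $a$ and $p$ strictly separates $b$ from $c$, and there is no $p\in S$ such that the line through $b$ and $p$ strictly separates $a$ from $c$. *)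

theory Defs
  imports "HOL-Analysis.Analysis"
begin

definition general_position :: "(real^2) set \<Rightarrow> bool" where
  "general_position S \<longleftrightarrow>
     (\<forall>x\<in>S. \<forall>y\<in>S. \<forall>z\<in>S. x \<noteq> y \<and> y \<noteq> z \<and> x \<noteq> z \<longrightarrow> \<not> collinear {x, y, z})"

definition ambient_isotopy :: "((real^2) \<times> real \<Rightarrow> real^2) \<Rightarrow> bool" where
  "ambient_isotopy f \<longleftrightarrow>
     continuous_on (UNIV \<times> {0..1}) f \<and>
     (\<forall>t\<in>{0..1}. \<exists>g. homeomorphism UNIV UNIV (\<lambda>x. f (x, t)) g) \<and>
     (\<forall>x. f (x, 0) = x)"

definition orient :: "real^2 \<Rightarrow> real^2 \<Rightarrow> real^2 \<Rightarrow> real" where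
  "orient p q r = (q$1 - p$1) * (r$2 - p$2) - (q$2 - p$2) * (r$1 - p$1)"

definition line_strictly_separates :: "real^2 \<Rightarrow> real^2 \<Rightarrow> real^2 \<Rightarrow> real^2 \<Rightarrow> bool" where
  "line_strictly_separates a p x y \<longleftrightarrow> a \<noteq> p \<and> orient a p x * orient a p y < 0"

definition exit_edge :: "(real^2) set \<Rightarrow> real^2 \<Rightarrow> real^2 \<Rightarrow> real^2 \<Rightarrow> bool" where
  "exit_edge S a b c \<longleftrightarrow>
     a \<in> S \<and> b \<in> S \<and> c \<in> S \<and> a \<noteq> b \<and> b \<noteq> c \<and> a \<noteq> c \<and>
     \<not> (\<exists>p\<in>S. line_strictly_separates a p b c) \<and>
     \<not> (\<exists>p\<in>S. line_strictly_separates b p a c)"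

end

theory Submission
  imports Defs
begin

text \<open>
  Suppose the line through \<open>a\<close> and some \<open>p \<in> S\<close> strictly separated \<open>b\<close> from \<open>c\<close>.
  At time \<open>t\<^sub>0\<close> the point \<open>c\<close> lies on the segment \<open>ab\<close> and neither \<open>b\<close> nor \<open>c\<close> is
  collinear with \<open>a, p\<close>, so \<open>b\<close> and \<open>c\<close> are then strictly on the same side of the line
  through \<open>a, p\<close>. By continuity of the isotopy and the intermediate value theorem, one of
  the triples \<open>a p b\<close>, \<open>a p c\<close> becomes collinear at some earlier time, contradicting general
  position before \<open>t\<^sub>0\<close>. The same argument with \<open>a\<close> and \<open>b\<close> exchanged gives the second
  condition of an exit edge.
\<close>

lemma collinear_if_orient_eq_0:
  fixes x y z :: "real^2"
  assumes "orient x y z = 0"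
  shows "collinear {x, y, z}"
proof (cases "x = y")
  case True
  then show ?thesis by simp
next
  case False
  define d where "d = y - x"
  have d_nonzero: "d $ 1 \<noteq> 0 \<or> d $ 2 \<noteq> 0"
    using False unfolding d_def by (auto simp: vec_eq_iff forall_2)
  have cross: "(z$2 - x$2) * d$1 = (z$1 - x$1) * d$2"
    using assms unfolding orient_def d_def by (simp add: algebra_simps)
  obtain k where k: "z - x = k *\<^sub>R d"
  proof (cases "d $ 1 = 0")
    case True
    with d_nonzero cross show ?thesis
      by (intro that[of "(z$2 - x$2) / d$2"]) (auto simp: vec_eq_iff forall_2 field_simps)
  next
    case False
    with cross show ?thesis
      by (intro that[of "(z$1 - x$1) / d$1"]) (auto simp: vec_eq_iff forall_2 field_simps)
  qed
  then have "z = (1 - k) *\<^sub>R x + (1 - (1 - k)) *\<^sub>R y"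
    unfolding d_def by (simp add: algebra_simps)
  then have "collinear {x, z, y}"
    unfolding collinear_3_expand by blast
  then show ?thesis
    by (simp add: insert_commute)
qed

lemma orient_mult_pos_if_closed_segment:
  fixes a b c p :: "real^2"
  assumes "c \<in> closed_segment a b" and "orient a p c \<noteq> 0"
  shows "orient a p b * orient a p c > 0"
proof -
  obtain u where u: "0 \<le> u" "c = (1 - u) *\<^sub>R a + u *\<^sub>R b"
    using assms(1) unfolding closed_segment_def by auto
  have c_orient: "orient a p c = u * orient a p b"
    unfolding u(2) orient_def by (simp add: algebra_simps)
  with assms(2) u(1) have "u > 0" "orient a p b \<noteq> 0"
    by auto
  then show ?thesis
    unfolding c_orient by (auto simp: mult.left_commute zero_less_mult_iff linorder_neq_iff)
qed

lemma ambient_isotopy_inj: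
  assumes "ambient_isotopy f" and "t \<in> {0..1}" and "x \<noteq> y"
  shows "f (x, t) \<noteq> f (y, t)"
proof -
  obtain g where "homeomorphism UNIV UNIV (\<lambda>x. f (x, t)) g"
    using assms(1,2) unfolding ambient_isotopy_def by blast
  then have "g (f (x, t)) = x" "g (f (y, t)) = y"
    unfolding homeomorphism_def by auto
  with assms(3) show ?thesis
    by metis
qed

lemma ambient_isotopy_continuous_on_track:
  assumes "ambient_isotopy f"
  shows "continuous_on {0..1} (\<lambda>t. f (x, t))"
proof -
  have "continuous_on (UNIV \<times> {0..1}) f"
    using assms unfolding ambient_isotopy_def by blast
  then show ?thesis
    by (rule continuous_on_compose2) (auto intro!: continuous_on_Pair continuous_on_id continuous_on_const)
qed

lemma orient_sign_change_collinear:
  fixes x y z w :: "real \<Rightarrow> real^2"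
  assumes "0 < t0"
    and "continuous_on {0..t0} x" "continuous_on {0..t0} y"
    and "continuous_on {0..t0} z" "continuous_on {0..t0} w"
    and "orient (x 0) (y 0) (z 0) * orient (x 0) (y 0) (w 0) < 0"
    and "orient (x t0) (y t0) (z t0) * orient (x t0) (y t0) (w t0) > 0"
  obtains t where "t \<in> {0..<t0}" "collinear {x t, y t, z t} \<or> collinear {x t, y t, w t}"
proof -
  define G where "G t = orient (x t) (y t) (z t) * orient (x t) (y t) (w t)" for t
  have "continuous_on {0..t0} G"
    unfolding G_def orient_def using assms(2-5) by (intro continuous_intros)
  then obtain t where t: "0 \<le> t" "t \<le> t0" "G t = 0"
    using IVT'[of G 0 0 t0] assms(1,6,7) unfolding G_def by auto
  with assms(7) have "t \<in> {0..<t0}"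
    unfolding G_def by (cases "t = t0") auto
  moreover from t(3) have "collinear {x t, y t, z t} \<or> collinear {x t, y t, w t}"
    unfolding G_def using collinear_if_orient_eq_0 by auto
  ultimately show ?thesis
    using that by blast
qed

lemma collision_edge_not_separated:
  fixes S :: "(real^2) set" and f :: "(real^2) \<times> real \<Rightarrow> real^2"
  assumes isotopy: "ambient_isotopy f" and "0 < t0" "t0 \<le> 1"
    and before: "\<forall>t\<in>{0..<t0}. general_position ((\<lambda>s. f (s, t)) ` S)"
    and "a \<in> S" "b \<in> S" "c \<in> S" "a \<noteq> b" "b \<noteq> c" "a \<noteq> c"
    and unique: "\<forall>x\<in>(\<lambda>s. f (s, t0)) ` S. \<forall>y\<in>(\<lambda>s. f (s, t0)) ` S. \<forall>z\<in>(\<lambda>s. f (s, t0)) ` S.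
           x \<noteq> y \<and> y \<noteq> z \<and> x \<noteq> z \<and> collinear {x, y, z} \<longrightarrow>
           {x, y, z} = {f (a, t0), f (b, t0), f (c, t0)}"
    and on_segment: "f (c, t0) \<in> closed_segment (f (a, t0)) (f (b, t0))"
  shows "\<not> (\<exists>p\<in>S. line_strictly_separates a p b c)"
proof
  assume "\<exists>p\<in>S. line_strictly_separates a p b c"
  then obtain p where "p \<in> S" "a \<noteq> p" and separated: "orient a p b * orient a p c < 0"
    unfolding line_strictly_separates_def by auto
  then have "p \<noteq> b" "p \<noteq> c"
    by (auto simp: orient_def)
  have distinct_images: "f (a, t) \<noteq> f (p, t)" "f (p, t) \<noteq> f (q, t)" "f (a, t) \<noteq> f (q, t)"
    if "t \<in> {0..1}" "q \<in> {b, c}" for t q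
    using ambient_isotopy_inj[OF isotopy that(1)] that(2) \<open>a \<noteq> p\<close> \<open>p \<noteq> b\<close> \<open>p \<noteq> c\<close>
      \<open>a \<noteq> b\<close> \<open>a \<noteq> c\<close> by auto
  have "t0 \<in> {0..1}"
    using \<open>0 < t0\<close> \<open>t0 \<le> 1\<close> by auto
  have not_collinear_at_t0: "orient (f (a, t0)) (f (p, t0)) (f (q, t0)) \<noteq> 0" if "q \<in> {b, c}" for q
  proof
    assume "orient (f (a, t0)) (f (p, t0)) (f (q, t0)) = 0"
    then have "collinear {f (a, t0), f (p, t0), f (q, t0)}"
      by (rule collinear_if_orient_eq_0)
    moreover have "q \<in> S"
      using that \<open>b \<in> S\<close> \<open>c \<in> S\<close> by auto
    ultimately have "{f (a, t0), f (p, t0), f (q, t0)} = {f (a, t0), f (b, t0), f (c, t0)}"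
      using unique[rule_format, OF imageI imageI imageI, OF \<open>a \<in> S\<close> \<open>p \<in> S\<close> \<open>q \<in> S\<close>]
        distinct_images[OF \<open>t0 \<in> {0..1}\<close> that] by blast
    then have "f (p, t0) \<in> {f (a, t0), f (b, t0), f (c, t0)}"
      by blast
    then show False
      using distinct_images[OF \<open>t0 \<in> {0..1}\<close>, of b] distinct_images[OF \<open>t0 \<in> {0..1}\<close>, of c]
      by auto
  qed
  have same_side_at_t0:
    "orient (f (a, t0)) (f (p, t0)) (f (b, t0)) * orient (f (a, t0)) (f (p, t0)) (f (c, t0)) > 0"
    using orient_mult_pos_if_closed_segment[OF on_segment not_collinear_at_t0] by simp
  have "continuous_on {0..t0} (\<lambda>t. f (s, t))" for s
    by (rule continuous_on_subset[OF ambient_isotopy_continuous_on_track[OF isotopy]])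
      (use \<open>t0 \<le> 1\<close> in auto)
  moreover have "f (s, 0) = s" for s
    using isotopy unfolding ambient_isotopy_def by auto
  ultimately obtain t where "t \<in> {0..<t0}"
    and "collinear {f (a, t), f (p, t), f (b, t)} \<or> collinear {f (a, t), f (p, t), f (c, t)}"
    using orient_sign_change_collinear[of t0 "\<lambda>t. f (a, t)" "\<lambda>t. f (p, t)" "\<lambda>t. f (b, t)"
        "\<lambda>t. f (c, t)"] \<open>0 < t0\<close> separated same_side_at_t0 by auto
  then obtain q where "q \<in> {b, c}" and collinear: "collinear {f (a, t), f (p, t), f (q, t)}"
    by blast
  have "t \<in> {0..1}"
    using \<open>t \<in> {0..<t0}\<close> \<open>t0 \<le> 1\<close> by auto
  moreover have "q \<in> S"
    using \<open>q \<in> {b, c}\<close> \<open>b \<in> S\<close> \<open>c \<in> S\<close> by auto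
  ultimately show False
    using before[rule_format, OF \<open>t \<in> {0..<t0}\<close>, unfolded general_position_def, rule_format,
        OF imageI imageI imageI, OF \<open>a \<in> S\<close> \<open>p \<in> S\<close> \<open>q \<in> S\<close>]
      distinct_images[OF \<open>t \<in> {0..1}\<close> \<open>q \<in> {b, c}\<close>] collinear
    by blast
qed

theorem proposition2:
  fixes S :: "(real^2) set" and f :: "(real^2) \<times> real \<Rightarrow> real^2"
    and a b c :: "real^2" and t0 :: real
  assumes "finite S" and "general_position S"
    and "ambient_isotopy f"
    and "0 < t0" and "t0 \<le> 1"
    and "\<forall>t\<in>{0..<t0}. general_position ((\<lambda>s. f (s, t)) ` S)"
    and "a \<in> S" and "b \<in> S" and "c \<in> S"
    and "a \<noteq> b" and "b \<noteq> c" and "a \<noteq> c"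
    and "collinear {f (a, t0), f (b, t0), f (c, t0)}"
    and "\<forall>x\<in>(\<lambda>s. f (s, t0)) ` S. \<forall>y\<in>(\<lambda>s. f (s, t0)) ` S. \<forall>z\<in>(\<lambda>s. f (s, t0)) ` S.
           x \<noteq> y \<and> y \<noteq> z \<and> x \<noteq> z \<and> collinear {x, y, z} \<longrightarrow>
           {x, y, z} = {f (a, t0), f (b, t0), f (c, t0)}"
    and "f (c, t0) \<in> closed_segment (f (a, t0)) (f (b, t0))"
  shows "exit_edge S a b c"
proof -
  have "\<not> (\<exists>p\<in>S. line_strictly_separates a p b c)"
    by (rule collision_edge_not_separated[OF assms(3-12) assms(14-15)])
  moreover have "\<not> (\<exists>p\<in>S. line_strictly_separates b p a c)"
  proof (rule collision_edge_not_separated[OF assms(3-6,8,7,9)])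
    show "\<forall>x\<in>(\<lambda>s. f (s, t0)) ` S. \<forall>y\<in>(\<lambda>s. f (s, t0)) ` S. \<forall>z\<in>(\<lambda>s. f (s, t0)) ` S.
           x \<noteq> y \<and> y \<noteq> z \<and> x \<noteq> z \<and> collinear {x, y, z} \<longrightarrow>
           {x, y, z} = {f (b, t0), f (a, t0), f (c, t0)}"
      using assms(14) by (simp add: insert_commute)
    show "f (c, t0) \<in> closed_segment (f (b, t0)) (f (a, t0))"
      using assms(15) by (simp add: closed_segment_commute)
  qed (use assms(10-12) in auto)
  ultimately show ?thesis
    unfolding exit_edge_def using assms(7-12) by auto
qed

end
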